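(* Let $h>0$ and $I(S,C)=\log\frac{1+hS}{1+hSe^{-C}}$ on $S>0$, $C>0$. Then the Hessian of $I$ at $(S,C)$ is negative semidefinite if and only if $$C\ge \log\left(2+\frac{1}{hS}\right).$$ The boundary of this region is parametrized by $\lambda_c\in(0,1)$ as $hS=\frac{\sqrt{\lambda_c}}{1-\sqrt{\lambda_c}}$, $e^{-C}=\frac{\sqrt{\lambda_c}}{1+\sqrt{\lambda_c}}$, and $C\to\log 2$ as $\lambda_c\to 1$. In particular, for every $S>0$ and every $C\in(0,\log 2)$ the Hessian of $I$ at $(S,C)$ is not negative semidefinite.
   Context: Logarithms are natural. $I(S,C)$ is the mutual information spectral density (nats/sec/Hz) at a frequency with power gain $h$, input power density $S$ and fronthaul rate density $C$. *)

theory Defs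
  imports "HOL-Analysis.Analysis"
begin

definition MI :: "real \<Rightarrow> real \<Rightarrow> real \<Rightarrow> real" where
  "MI h S C = ln ((1 + h * S) / (1 + h * S * exp (- C)))"

definition hessian2 :: "(real \<Rightarrow> real \<Rightarrow> real) \<Rightarrow> real \<Rightarrow> real \<Rightarrow> real^2^2" where
  "hessian2 f S C = vector
     [vector [deriv (\<lambda>s. deriv (\<lambda>s'. f s' C) s) S,
              deriv (\<lambda>s. deriv (\<lambda>c. f s c) C) S],
      vector [deriv (\<lambda>c. deriv (\<lambda>s. f s c) S) C,
              deriv (\<lambda>c. deriv (\<lambda>c'. f S c') c) C]]"

definition neg_semidef :: "real^'n^'n \<Rightarrow> bool" where
  "neg_semidef M \<longleftrightarrow> (\<forall>v. v \<bullet> (M *v v) \<le> 0)"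

end

theory Submission
  imports Defs
begin

text \<open>With \<open>x = h S\<close> and \<open>u = e\<^sup>-\<^sup>C \<in> (0,1)\<close> all second partials of \<open>I\<close> are rational in
  \<open>x\<close> and \<open>u\<close>. The \<open>(S,S)\<close> entry is negative because \<open>u < 1\<close>, so the Hessian is negative
  semidefinite iff its determinant is nonnegative, and the determinant has the sign of
  \<open>x - u (2 x + 1)\<close>, i.e. of \<open>e\<^sup>C - (2 + 1/x)\<close>. On the boundary \<open>e\<^sup>-\<^sup>C = x / (1 + 2 x)\<close>, and
  \<open>\<surd>\<lambda>\<^sub>c = x / (1 + x)\<close> is the parameter of the paper.\<close>

definition MI_dS :: "real \<Rightarrow> real \<Rightarrow> real \<Rightarrow> real" where
  "MI_dS h S C = h / (1 + h * S) - h * exp (- C) / (1 + h * S * exp (- C))"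

definition MI_dC :: "real \<Rightarrow> real \<Rightarrow> real \<Rightarrow> real" where
  "MI_dC h S C = h * S * exp (- C) / (1 + h * S * exp (- C))"

lemma MI_denominators_pos:
  fixes h S C :: real
  assumes "h > 0" "S > 0"
  shows "0 < 1 + h * S \<and> 0 < 1 + h * S * exp (- C)"
  using assms by (simp_all add: add_pos_pos)

lemma MI_eq_ln_diff:
  assumes "h > 0" "S > 0"
  shows "MI h S C = ln (1 + h * S) - ln (1 + h * S * exp (- C))"
  using MI_denominators_pos[OF assms, of C] by (simp add: MI_def ln_div)

lemma MI_has_derivative_S:
  assumes h: "h > 0" and S: "S > 0"
  shows "((\<lambda>s. MI h s C) has_real_derivative MI_dS h S C) (at S)"
proof (rule has_field_derivative_transform_within_open)
  show "((\<lambda>s. ln (1 + h * s) - ln (1 + h * s * exp (- C))) has_real_derivative MI_dS h S C) (at S)"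
    unfolding MI_dS_def using MI_denominators_pos[OF h S, of C]
    by (auto intro!: derivative_eq_intros)
  show "\<And>s. s \<in> {0<..} \<Longrightarrow> ln (1 + h * s) - ln (1 + h * s * exp (- C)) = MI h s C"
    using h by (simp add: MI_eq_ln_diff)
qed (use S in auto)

lemma MI_has_derivative_C:
  assumes "h > 0" "S > 0"
  shows "((\<lambda>c. MI h S c) has_real_derivative MI_dC h S C) (at C)"
  unfolding MI_eq_ln_diff[OF assms] MI_dC_def using MI_denominators_pos[OF assms, of C]
  by (auto intro!: derivative_eq_intros)

lemma MI_dS_has_derivative_S:
  assumes "h > 0" "S > 0"
  shows "((\<lambda>s. MI_dS h s C) has_real_derivative
           h^2 * exp (- C)^2 / (1 + h * S * exp (- C))^2 - h^2 / (1 + h * S)^2) (at S)"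
  unfolding MI_dS_def using MI_denominators_pos[OF assms, of C]
  by (auto intro!: derivative_eq_intros simp: power2_eq_square)

lemma MI_dS_has_derivative_C:
  assumes "h > 0" "S > 0"
  shows "((\<lambda>c. MI_dS h S c) has_real_derivative h * exp (- C) / (1 + h * S * exp (- C))^2) (at C)"
  unfolding MI_dS_def using MI_denominators_pos[OF assms, of C]
  by (auto intro!: derivative_eq_intros simp: power2_eq_square algebra_simps)

lemma MI_dC_has_derivative_S:
  assumes "h > 0" "S > 0"
  shows "((\<lambda>s. MI_dC h s C) has_real_derivative h * exp (- C) / (1 + h * S * exp (- C))^2) (at S)"
  unfolding MI_dC_def using MI_denominators_pos[OF assms, of C]
  by (auto intro!: derivative_eq_intros simp: power2_eq_square algebra_simps)

lemma MI_dC_has_derivative_C: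
  assumes "h > 0" "S > 0"
  shows "((\<lambda>c. MI_dC h S c) has_real_derivative - h * S * exp (- C) / (1 + h * S * exp (- C))^2) (at C)"
  unfolding MI_dC_def using MI_denominators_pos[OF assms, of C]
  by (auto intro!: derivative_eq_intros simp: power2_eq_square algebra_simps)

lemma hessian2_MI:
  assumes h: "h > 0" and S: "S > 0"
  shows "hessian2 (MI h) S C = vector
     [vector [h^2 * exp (- C)^2 / (1 + h * S * exp (- C))^2 - h^2 / (1 + h * S)^2,
              h * exp (- C) / (1 + h * S * exp (- C))^2],
      vector [h * exp (- C) / (1 + h * S * exp (- C))^2,
              - h * S * exp (- C) / (1 + h * S * exp (- C))^2]]"
proof -
  have "eventually (\<lambda>s. s \<in> {0<..}) (nhds S)"
    using S by (intro eventually_nhds_in_open) auto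
  then have "deriv (\<lambda>s. deriv (\<lambda>s'. MI h s' C) s) S = deriv (\<lambda>s. MI_dS h s C) S"
        and "deriv (\<lambda>s. deriv (\<lambda>c. MI h s c) C) S = deriv (\<lambda>s. MI_dC h s C) S"
    by (auto intro!: deriv_cong_ev elim!: eventually_mono
             intro: DERIV_imp_deriv MI_has_derivative_S MI_has_derivative_C h)
  moreover have "deriv (\<lambda>c. deriv (\<lambda>s. MI h s c) S) C = deriv (\<lambda>c. MI_dS h S c) C"
            and "deriv (\<lambda>c. deriv (\<lambda>c'. MI h S c') c) C = deriv (\<lambda>c. MI_dC h S c) C"
    using DERIV_imp_deriv[OF MI_has_derivative_S[OF h S]]
          DERIV_imp_deriv[OF MI_has_derivative_C[OF h S]] by simp_all
  ultimately show ?thesis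
    unfolding hessian2_def
    using DERIV_imp_deriv[OF MI_dS_has_derivative_S[OF h S]]
          DERIV_imp_deriv[OF MI_dS_has_derivative_C[OF h S]]
          DERIV_imp_deriv[OF MI_dC_has_derivative_S[OF h S]]
          DERIV_imp_deriv[OF MI_dC_has_derivative_C[OF h S]] by simp
qed

lemma inner_matrix_vector_mult_2x2:
  fixes v :: "real^2"
  shows "v \<bullet> (vector [vector [a, b], vector [b, d]] *v v) = a * (v$1)^2 + 2 * b * v$1 * v$2 + d * (v$2)^2"
  by (simp add: inner_vec_def matrix_vector_mult_def sum_2 power2_eq_square algebra_simps)

lemma neg_semidef_2x2_iff:
  fixes a b d :: real
  assumes a: "a < 0"
  shows "neg_semidef (vector [vector [a, b], vector [b, d]] :: real^2^2) \<longleftrightarrow> a * d - b^2 \<ge> 0"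
proof
  assume "neg_semidef (vector [vector [a, b], vector [b, d]] :: real^2^2)"
  then have "(vector [b, -a] :: real^2) \<bullet> ((vector [vector [a, b], vector [b, d]] :: real^2^2) *v vector [b, -a]) \<le> 0"
    unfolding neg_semidef_def by (rule spec)
  then have "a * (a * d - b^2) \<le> 0"
    unfolding inner_matrix_vector_mult_2x2 by (simp add: power2_eq_square algebra_simps)
  then show "a * d - b^2 \<ge> 0" using a by (simp add: mult_le_0_iff)
next
  assume det: "a * d - b^2 \<ge> 0"
  show "neg_semidef (vector [vector [a, b], vector [b, d]] :: real^2^2)"
    unfolding neg_semidef_def inner_matrix_vector_mult_2x2
  proof
    fix v :: "real^2"
    have "a * (a * (v$1)^2 + 2 * b * v$1 * v$2 + d * (v$2)^2) = (a * v$1 + b * v$2)^2 + (a * d - b^2) * (v$2)^2"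
      by (simp add: power2_eq_square algebra_simps)
    also have "\<dots> \<ge> 0" using det by simp
    finally show "a * (v$1)^2 + 2 * b * v$1 * v$2 + d * (v$2)^2 \<le> 0"
      using a by (simp add: zero_le_mult_iff)
  qed
qed

lemma MI_hessian_det:
  fixes h x u :: real
  assumes "x > 0" "u > 0"
  shows "(h^2 * u^2 / (1 + x * u)^2 - h^2 / (1 + x)^2) * (- x * u / (1 + x * u)^2)
           - (h * u / (1 + x * u)^2)^2
         = h^2 * u * (x - u * (2 * x + 1)) / ((1 + x)^2 * (1 + x * u)^3)"
proof -
  define a b where "a = 1 + x" and "b = 1 + x * u"
  have "a \<noteq> 0" "b \<noteq> 0"
    unfolding a_def b_def using assms by (auto simp: add_pos_pos less_imp_neq[symmetric])
  then have "(h^2 * u^2 / b^2 - h^2 / a^2) * (- x * u / b^2) - (h * u / b^2)^2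
      = h^2 * ((- x * u) * (u^2 * a^2 - b^2) - u^2 * a^2) / (a^2 * b^4)"
    by (simp add: field_simps power2_eq_square power4_eq_xxxx)
  also have "(- x * u) * (u^2 * a^2 - b^2) - u^2 * a^2 = u * (x - u * (2 * x + 1)) * b"
    unfolding a_def b_def by (simp add: power2_eq_square algebra_simps)
  also have "h^2 * (u * (x - u * (2 * x + 1)) * b) / (a^2 * b^4) = h^2 * u * (x - u * (2 * x + 1)) / (a^2 * b^3)"
    using \<open>b \<noteq> 0\<close> by (simp add: eval_nat_numeral)
  finally show ?thesis unfolding a_def b_def .
qed

lemma MI_hessian_SS_neg:
  fixes h x u :: real
  assumes "h > 0" "x > 0" "0 < u" "u < 1"
  shows "h^2 * u^2 / (1 + x * u)^2 - h^2 / (1 + x)^2 < 0"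
proof -
  have "u / (1 + x * u) < 1 / (1 + x)"
    using assms by (simp add: field_simps add_pos_pos)
  then have "(u / (1 + x * u))^2 < (1 / (1 + x))^2"
    using assms by (intro power_strict_mono) auto
  then have "h^2 * (u / (1 + x * u))^2 < h^2 * (1 / (1 + x))^2"
    using assms by simp
  then show ?thesis by (simp add: power_divide)
qed

lemma hessian2_MI_neg_semidef_iff:
  assumes h: "h > 0" and S: "S > 0" and C: "C > 0"
  shows "neg_semidef (hessian2 (MI h) S C) \<longleftrightarrow> C \<ge> ln (2 + 1 / (h * S))"
proof -
  define x where "x = h * S"
  define u where "u = exp (- C)"
  have x: "x > 0" unfolding x_def using h S by simp
  have u: "0 < u" "u < 1" unfolding u_def using C by auto
  have H: "hessian2 (MI h) S C = vector
     [vector [h^2 * u^2 / (1 + x * u)^2 - h^2 / (1 + x)^2, h * u / (1 + x * u)^2],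
      vector [h * u / (1 + x * u)^2, - x * u / (1 + x * u)^2]]"
    unfolding hessian2_MI[OF h S] x_def u_def by (simp add: mult.assoc)
  have "neg_semidef (hessian2 (MI h) S C) \<longleftrightarrow>
      0 \<le> h^2 * u * (x - u * (2 * x + 1)) / ((1 + x)^2 * (1 + x * u)^3)"
    unfolding H neg_semidef_2x2_iff[OF MI_hessian_SS_neg[OF h x u]] MI_hessian_det[OF x u(1)] ..
  also have "\<dots> \<longleftrightarrow> 0 \<le> x - u * (2 * x + 1)"
  proof -
    have "0 \<le> p * d / q \<longleftrightarrow> 0 \<le> d" if "0 < p" "0 < q" for p q d :: real
      using that by (simp add: zero_le_divide_iff zero_le_mult_iff)
    then show ?thesis using h x u by (simp add: add_pos_pos)
  qed
  also have "\<dots> \<longleftrightarrow> 2 + 1 / x \<le> exp C"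
    using x u unfolding u_def by (simp add: exp_minus field_simps)
  also have "\<dots> \<longleftrightarrow> ln (2 + 1 / x) \<le> C"
    using x by (subst ln_le_cancel_iff[symmetric]) (auto simp: add_pos_pos)
  finally show ?thesis unfolding x_def .
qed

lemma ln_two_plus_inverse_iff:
  fixes x C :: real
  assumes "x > 0"
  shows "C = ln (2 + 1 / x) \<longleftrightarrow> exp (- C) = x / (1 + 2 * x)"
proof -
  have "C = ln (2 + 1 / x) \<longleftrightarrow> exp C = 2 + 1 / x"
    using assms by (metis add_pos_pos exp_ln ln_exp zero_less_divide_1_iff zero_less_numeral)
  also have "\<dots> \<longleftrightarrow> exp (- C) = x / (1 + 2 * x)"
    using assms by (auto simp: exp_minus field_simps)
  finally show ?thesis .
qed

lemma sqrt_boundary_parametrization: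
  fixes x y :: real
  assumes x: "x > 0"
  shows "(\<exists>l\<in>{0<..<1}. x = sqrt l / (1 - sqrt l) \<and> y = sqrt l / (1 + sqrt l))
         \<longleftrightarrow> y = x / (1 + 2 * x)"
proof
  assume "\<exists>l\<in>{0<..<1}. x = sqrt l / (1 - sqrt l) \<and> y = sqrt l / (1 + sqrt l)"
  then obtain l where l: "0 < l" "l < 1" "x = sqrt l / (1 - sqrt l)" "y = sqrt l / (1 + sqrt l)"
    by auto
  then have "sqrt l < 1" by simp
  then have t: "sqrt l = x / (1 + x)" using l(3) x by (simp add: field_simps)
  moreover have "1 + sqrt l = (1 + 2 * x) / (1 + x)" unfolding t using x by (simp add: field_simps)
  ultimately show "y = x / (1 + 2 * x)" using l(4) x by simp
next
  assume y: "y = x / (1 + 2 * x)"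
  define t where "t = x / (1 + x)"
  have t: "0 < t" "t < 1" unfolding t_def using x by auto
  show "\<exists>l\<in>{0<..<1}. x = sqrt l / (1 - sqrt l) \<and> y = sqrt l / (1 + sqrt l)"
  proof (intro bexI conjI)
    show "t^2 \<in> {0<..<1}" using t by (simp add: power_less_one_iff)
    have sqrt_t: "sqrt (t^2) = t" using t by simp
    have "1 + t = (1 + 2 * x) / (1 + x)" unfolding t_def using x by (simp add: field_simps)
    then have "y = t / (1 + t)" unfolding y using x by (simp add: t_def)
    moreover have "x = t / (1 - t)" unfolding t_def using x by (simp add: field_simps)
    ultimately show "x = sqrt (t^2) / (1 - sqrt (t^2))" "y = sqrt (t^2) / (1 + sqrt (t^2))"
      unfolding sqrt_t by simp_all
  qed
qed

lemma tendsto_minus_ln_sqrt_at_left_1: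
  "((\<lambda>l. - ln (sqrt l / (1 + sqrt l))) \<longlongrightarrow> ln 2) (at_left 1)"
proof -
  have "((\<lambda>l. - ln (sqrt l / (1 + sqrt l))) \<longlongrightarrow> - ln (sqrt 1 / (1 + sqrt 1))) (at_left (1::real))"
    by (intro tendsto_intros) auto
  then show ?thesis by (simp add: ln_div)
qed

theorem mainTheorem4:
  fixes h :: real
  assumes h: "h > 0"
  shows "(\<forall>S C. S > 0 \<longrightarrow> C > 0 \<longrightarrow>
            (neg_semidef (hessian2 (MI h) S C) \<longleftrightarrow> C \<ge> ln (2 + 1 / (h * S))))
       \<and> (\<forall>S C. S > 0 \<longrightarrow> C > 0 \<longrightarrow>
            (C = ln (2 + 1 / (h * S)) \<longleftrightarrow>
             (\<exists>l\<in>{0<..<1}. h * S = sqrt l / (1 - sqrt l)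
                             \<and> exp (- C) = sqrt l / (1 + sqrt l))))
       \<and> ((\<lambda>l. - ln (sqrt l / (1 + sqrt l))) \<longlongrightarrow> ln 2) (at_left 1)
       \<and> (\<forall>S C. S > 0 \<longrightarrow> 0 < C \<longrightarrow> C < ln 2 \<longrightarrow>
            \<not> neg_semidef (hessian2 (MI h) S C))"
proof (intro conjI allI impI)
  fix S C :: real
  assume S: "S > 0" and C: "C > 0"
  then show "neg_semidef (hessian2 (MI h) S C) \<longleftrightarrow> C \<ge> ln (2 + 1 / (h * S))"
    using h by (simp add: hessian2_MI_neg_semidef_iff)
  have hS: "h * S > 0" using h S by simp
  show "C = ln (2 + 1 / (h * S)) \<longleftrightarrow>
        (\<exists>l\<in>{0<..<1}. h * S = sqrt l / (1 - sqrt l) \<and> exp (- C) = sqrt l / (1 + sqrt l))"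
    unfolding ln_two_plus_inverse_iff[OF hS] sqrt_boundary_parametrization[OF hS] ..
  assume "C < ln 2"
  moreover have "ln 2 \<le> ln (2 + 1 / (h * S))" using hS by (subst ln_le_cancel_iff) (auto simp: add_pos_pos)
  ultimately show "\<not> neg_semidef (hessian2 (MI h) S C)"
    using hessian2_MI_neg_semidef_iff[OF h S C] by simp
qed (rule tendsto_minus_ln_sqrt_at_left_1)
end
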